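(* Let $\{x_k\}$ be generated by the Subgradient-InexP method with the exogenous stepsize rule, under the standing assumptions. Then $\liminf_k f(x_k)=f^*$ (where $f^*=\inf_{x\in C}f(x)$, possibly $-\infty$). In addition, if $\Omega^*\neq\varnothing$, then $\{x_k\}$ converges to a point $x_*\in\Omega^*$.
   Context: Problem: minimize a convex $f:\mathbb{R}^n\to\mathbb{R}$ over a nonempty closed convex $C\subset\mathbb{R}^n$; $f^*:=\inf_{x\in C}f(x)$ and $\Omega^*$ is the (possibly empty) set of minimizers of $f$ on $C$. For $\epsilon\ge0$, $\partial_\epsilon f(x):=\{s: f(y)\ge f(x)+\langle s,y-x\rangle-\epsilon\ \forall y\}$. Relative error tolerance function: any $\varphi_{\gamma,\theta,\lambda}:(\mathbb{R}^n)^3\to[0,\infty)$ with $\varphi_{\gamma,\theta,\lambda}(u,v,w)\le\gamma\|v-u\|^2+\theta\|w-v\|^2+\lambda\|w-u\|^2$; for $u\in C$, $\mathcal{P}_C(\varphi_{\gamma,\theta,\lambda},u,v):=\{w\in C:\langle v-w,z-w\rangle\le\varphi_{\gamma,\theta,\lambda}(u,v,w)\ \forall z\in C\}$. Subgradient-InexP method: $x_0\in C$; at iteration $k$, if $0\in\partial f(x_k)$ stop; otherwise choose nonzero $s_k\in\partial_{\epsilon_k}f(x_k)$, stepsize $t_k>0$, and $x_{k+1}\in\mathcal{P}_C(\varphi_{\gamma_k,\theta_k,\lambda_k},x_k,x_k-t_ks_k)$. Standing assumptions: $\gamma_k\in[0,\bar\gamma)$, $\theta_k\in[0,\bar\theta)$,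 $\lambda_k\in[0,\bar\lambda)$ with $\bar\gamma\ge0$, $\bar\theta,\bar\lambda\in[0,1/2)$; the sequence is infinite. Exogenous stepsize rule: $\mu\ge0$; $\{\alpha_k\}$, $\{\epsilon_k\}$ nonnegative, $\{\epsilon_k\}$ nonincreasing, $\sum_k\alpha_k=+\infty$, $\sum_k\alpha_k^2<+\infty$, $\epsilon_k\le\mu\alpha_k$; $t_k:=\alpha_k/\eta_k$, $\eta_k:=\max\{1,\|s_k\|\}$. *)

theory Defs
  imports "HOL-Analysis.Analysis"
begin

definition eps_subdiff :: "('a::real_inner \<Rightarrow> real) \<Rightarrow> real \<Rightarrow> 'a \<Rightarrow> 'a set" where
  "eps_subdiff f \<epsilon> x = {s. \<forall>y. f y \<ge> f x + inner s (y - x) - \<epsilon>}"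

definition rel_err_tol :: "('a::real_normed_vector \<Rightarrow> 'a \<Rightarrow> 'a \<Rightarrow> real) \<Rightarrow> real \<Rightarrow> real \<Rightarrow> real \<Rightarrow> bool" where
  "rel_err_tol \<phi> \<gamma> \<theta> lam \<longleftrightarrow>
     (\<forall>u v w. 0 \<le> \<phi> u v w \<and>
        \<phi> u v w \<le> \<gamma> * (norm (v - u))\<^sup>2 + \<theta> * (norm (w - v))\<^sup>2 + lam * (norm (w - u))\<^sup>2)"

definition inexact_proj :: "'a::real_inner set \<Rightarrow> ('a \<Rightarrow> 'a \<Rightarrow> 'a \<Rightarrow> real) \<Rightarrow> 'a \<Rightarrow> 'a \<Rightarrow> 'a set" where
  "inexact_proj C \<phi> u v = {w \<in> C. \<forall>z\<in>C. inner (v - w) (z - w) \<le> \<phi> u v w}"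

definition minimizers :: "('a \<Rightarrow> real) \<Rightarrow> 'a set \<Rightarrow> 'a set" where
  "minimizers f C = {x \<in> C. \<forall>y\<in>C. f x \<le> f y}"

end

theory Submission imports Defs begin

text \<open>
  For any feasible z, an inexact projection of the subgradient step x_k - t_k s_k is at most
  as far from z as an exact one, up to an error of order (t_k \<parallel>s_k\<parallel>)^2 \<le> \<alpha>_k^2; together with the
  \<epsilon>-subgradient inequality this gives the quasi-Fejer estimate
  \<parallel>x_{k+1} - z\<parallel>^2 \<le> \<parallel>x_k - z\<parallel>^2 + 2 t_k (f z - f x_k) + L \<alpha>_k^2 with \<Sum> \<alpha>_k^2 < \<infinity>.
  If the liminf of f(x_k) stayed above f z + \<delta>, the estimate would make \<Sum> t_k finite and the
  iterates bounded; but on a bounded set the \<epsilon>-subgradients are bounded, so t_k is comparable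
  to \<alpha>_k, contradicting \<Sum> \<alpha>_k = \<infinity>. With a minimizer, the estimate makes every distance
  \<parallel>x_k - z\<parallel> to a minimizer convergent, the iterates are bounded, and a cluster point along a
  subsequence realising the liminf is a minimizer to which the whole sequence then converges.
\<close>

lemma inexact_proj_dist_le:
  fixes u v w :: "'a::real_inner"
  assumes u: "u \<in> C" and w: "w \<in> inexact_proj C \<phi> u v"
    and tol: "rel_err_tol \<phi> \<gamma> \<theta> l"
    and g: "0 \<le> \<gamma>" "\<gamma> \<le> \<gamma>b" and th: "0 \<le> \<theta>" "\<theta> \<le> \<theta>b" "\<theta>b < 1/2"
    and lm: "0 \<le> l" "l \<le> lb" "lb < 1/2"
  shows "norm (w - u) \<le> ((\<gamma>b + 2) / (1 - \<theta>b - lb)) * norm (v - u)"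
proof -
  define A where "A = norm (w - u)"
  define B where "B = norm (v - u)"
  define p where "p = inner (w - u) (v - u)"
  define d where "d = 1 - \<theta>b - lb"
  have d: "0 < d" "d \<le> 1" using th lm by (simp_all add: d_def)
  have AB0: "0 \<le> A" "0 \<le> B" by (auto simp: A_def B_def)
  have "inner (v - w) (u - w) \<le> \<phi> u v w" using w u by (simp add: inexact_proj_def)
  also have "\<dots> \<le> \<gamma> * B\<^sup>2 + \<theta> * (norm (w - v))\<^sup>2 + l * A\<^sup>2"
    using tol by (simp add: rel_err_tol_def A_def B_def)
  finally have "inner (v - w) (u - w) \<le> \<gamma> * B\<^sup>2 + \<theta> * (norm (w - v))\<^sup>2 + l * A\<^sup>2" .
  moreover have "inner (v - w) (u - w) = A\<^sup>2 - p" "(norm (w - v))\<^sup>2 = A\<^sup>2 - 2*p + B\<^sup>2"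
    unfolding A_def B_def p_def power2_norm_eq_inner
    by (simp_all add: inner_diff_left inner_diff_right inner_commute)
  ultimately have quad: "(1 - \<theta> - l) * A\<^sup>2 \<le> (1 - 2*\<theta>) * p + (\<gamma> + \<theta>) * B\<^sup>2"
    by (simp add: algebra_simps)
  have "p \<le> A * B"
    unfolding p_def A_def B_def by (rule order_trans[OF abs_ge_self Cauchy_Schwarz_ineq2])
  then have "(1 - 2*\<theta>) * p \<le> A * B"
  proof (cases "p \<ge> 0")
    case True
    then have "(1 - 2*\<theta>) * p \<le> p" using th by (simp add: algebra_simps)
    then show ?thesis using \<open>p \<le> A * B\<close> by linarith
  next
    case False
    then have "(1 - 2*\<theta>) * p \<le> 0" using th by (simp add: mult_nonneg_nonpos)
    then show ?thesis using AB0 by (meson mult_nonneg_nonneg order_trans)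
  qed
  moreover have "d * A\<^sup>2 \<le> (1 - \<theta> - l) * A\<^sup>2" using th lm by (auto simp: d_def intro!: mult_right_mono)
  moreover have "(\<gamma> + \<theta>) * B\<^sup>2 \<le> (\<gamma>b + 1) * B\<^sup>2" using th g by (auto intro!: mult_right_mono)
  ultimately have main: "d * A\<^sup>2 \<le> A * B + (\<gamma>b + 1) * B\<^sup>2" using quad by linarith
  have "A \<le> ((\<gamma>b + 2) / d) * B"
  proof (cases "A \<le> B")
    case True
    have "1 \<le> (\<gamma>b + 2) / d" using d g by (simp add: field_simps)
    then have "1 * B \<le> ((\<gamma>b + 2) / d) * B" using AB0 by (intro mult_right_mono) auto
    then show ?thesis using True by linarith
  next
    case False
    have "(\<gamma>b + 1) * B\<^sup>2 \<le> (\<gamma>b + 1) * (A * B)" using False AB0 g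
      by (intro mult_left_mono) (auto simp: power2_eq_square intro: mult_right_mono)
    then have "d * A * A \<le> (\<gamma>b + 2) * B * A" using main by (simp add: power2_eq_square algebra_simps)
    then have "d * A \<le> (\<gamma>b + 2) * B" using False AB0 by simp
    then show ?thesis using d by (simp add: field_simps)
  qed
  then show ?thesis by (simp add: A_def B_def d_def)
qed

lemma inexact_proj_sq_dist_le:
  fixes u v w z :: "'a::real_inner"
  assumes u: "u \<in> C" and w: "w \<in> inexact_proj C \<phi> u v" and z: "z \<in> C"
    and tol: "rel_err_tol \<phi> \<gamma> \<theta> l"
    and g: "0 \<le> \<gamma>" "\<gamma> \<le> \<gamma>b" and th: "0 \<le> \<theta>" "\<theta> \<le> \<theta>b" "\<theta>b < 1/2"
    and lm: "0 \<le> l" "l \<le> lb" "lb < 1/2"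
  shows "(norm (w - z))\<^sup>2 \<le> (norm (v - z))\<^sup>2 + (2*\<gamma>b + ((\<gamma>b + 2) / (1 - \<theta>b - lb))\<^sup>2) * (norm (v - u))\<^sup>2"
proof -
  define c where "c = (\<gamma>b + 2) / (1 - \<theta>b - lb)"
  define A where "A = norm (w - u)"
  define B where "B = norm (v - u)"
  have "A \<le> c * B" using inexact_proj_dist_le[OF u w tol g th lm] by (simp add: A_def B_def c_def)
  then have A2: "A\<^sup>2 \<le> c\<^sup>2 * B\<^sup>2"
    by (metis A_def norm_ge_zero power_mono power_mult_distrib)
  have "inner (v - w) (z - w) \<le> \<phi> u v w" using w z by (simp add: inexact_proj_def)
  also have "\<dots> \<le> \<gamma> * B\<^sup>2 + \<theta> * (norm (v - w))\<^sup>2 + l * A\<^sup>2"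
    using tol by (simp add: rel_err_tol_def A_def B_def norm_minus_commute)
  finally have "inner (v - w) (z - w) \<le> \<gamma> * B\<^sup>2 + \<theta> * (norm (v - w))\<^sup>2 + l * A\<^sup>2" .
  moreover have "(norm (w - z))\<^sup>2 = (norm (v - z))\<^sup>2 - (norm (v - w))\<^sup>2 + 2 * inner (v - w) (z - w)"
    unfolding power2_norm_eq_inner
    by (simp add: inner_diff_left inner_diff_right inner_commute algebra_simps)
  moreover have "2 * (\<theta> * (norm (v - w))\<^sup>2) \<le> (norm (v - w))\<^sup>2"
    using th mult_right_mono[of "2 * \<theta>" 1 "(norm (v - w))\<^sup>2"] by simp
  moreover have "2 * (l * A\<^sup>2) \<le> A\<^sup>2"
    using lm mult_right_mono[of "2 * l" 1 "A\<^sup>2"] by simp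
  moreover have "2 * (\<gamma> * B\<^sup>2) \<le> 2 * \<gamma>b * B\<^sup>2" using g by (auto intro!: mult_right_mono)
  ultimately show ?thesis using A2 by (simp add: c_def B_def algebra_simps)
qed

lemma eps_subdiff_step_sq_dist_le:
  fixes u s z :: "'a::real_inner"
  assumes s: "s \<in> eps_subdiff f e u" and t: "0 \<le> t"
  shows "(norm (u - t *\<^sub>R s - z))\<^sup>2
           \<le> (norm (u - z))\<^sup>2 + 2 * t * (f z - f u) + 2 * t * e + t\<^sup>2 * (norm s)\<^sup>2"
proof -
  have "(norm (u - t *\<^sub>R s - z))\<^sup>2 = (norm (u - z))\<^sup>2 + 2 * t * inner s (z - u) + t\<^sup>2 * (norm s)\<^sup>2"
    unfolding power2_norm_eq_inner
    by (simp add: inner_diff_left inner_diff_right inner_commute algebra_simps power2_eq_square)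
  moreover have "f z \<ge> f u + inner s (z - u) - e" using s by (simp add: eps_subdiff_def)
  ultimately show ?thesis using mult_left_mono[OF _ t] by (fastforce simp: algebra_simps)
qed

text \<open>Testing the \<epsilon>-subgradient inequality at x + s/\<parallel>s\<parallel> bounds \<parallel>s\<parallel> by the oscillation of f on a ball.\<close>
lemma eps_subdiff_norm_bounded:
  fixes f :: "'a::euclidean_space \<Rightarrow> real"
  assumes cont: "continuous_on UNIV f"
  obtains M where "\<And>x s e. norm x \<le> R \<Longrightarrow> e \<le> E \<Longrightarrow> s \<in> eps_subdiff f e x \<Longrightarrow> norm s \<le> M"
proof -
  have "compact (f ` cball 0 (R+1))"
    by (rule compact_continuous_image) (auto intro: continuous_on_subset[OF cont])
  then obtain B where B: "\<And>y. y \<in> cball 0 (R+1) \<Longrightarrow> \<bar>f y\<bar> \<le> B"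
    unfolding bounded_real by (meson compact_imp_bounded image_eqI bounded_real)
  have "norm s \<le> 2*B + \<bar>E\<bar>" if x: "norm x \<le> R" and e: "e \<le> E" and s: "s \<in> eps_subdiff f e x"
    for x s e
  proof (cases "s = 0")
    case True
    then show ?thesis using B[of x] x by simp
  next
    case False
    define y where "y = x + (1 / norm s) *\<^sub>R s"
    have "norm y \<le> norm x + 1"
      using norm_triangle_ineq[of x "(1 / norm s) *\<^sub>R s"] False by (simp add: y_def)
    then have "y \<in> cball 0 (R+1)" using x by auto
    moreover have "x \<in> cball 0 (R+1)" using x by auto
    moreover have "inner s (y - x) = norm s"
      using False by (simp add: y_def power2_norm_eq_inner[symmetric] power2_eq_square)
    moreover have "f y \<ge> f x + inner s (y - x) - e" using s by (auto simp: eps_subdiff_def)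
    ultimately show ?thesis using B[of x] B[of y] e abs_ge_self[of E] by linarith
  qed
  then show thesis using that by blast
qed

lemma quasi_fejer_convergent:
  fixes a e :: "nat \<Rightarrow> real"
  assumes step: "\<And>k. a (Suc k) \<le> a k + e k" and a0: "\<And>k. 0 \<le> a k"
    and e0: "\<And>k. 0 \<le> e k" and se: "summable e"
  shows "convergent a"
proof -
  define b where "b k = a k - (\<Sum>i<k. e i)" for k
  have "decseq b"
    by (rule decseq_SucI) (simp add: b_def, smt (verit) step)
  moreover have "- suminf e \<le> b k" for k
    using sum_le_suminf[OF se, of "{..<k}"] e0 a0[of k] by (simp add: b_def)
  ultimately obtain L where "b \<longlonglongrightarrow> L" using decseq_convergent by blast
  then have "(\<lambda>k. b k + (\<Sum>i<k. e i)) \<longlonglongrightarrow> L + suminf e"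
    using summable_LIMSEQ[OF se] by (intro tendsto_add)
  then show ?thesis by (auto simp: b_def convergent_def)
qed

lemma quasi_fejer_descent_summable:
  fixes a t e :: "nat \<Rightarrow> real"
  assumes descent: "\<And>k. a (Suc k) + \<delta> * t k \<le> a k + e k"
    and a0: "\<And>k. 0 \<le> a k" and \<delta>: "0 < \<delta>" and t0: "\<And>k. 0 \<le> t k"
    and e0: "\<And>k. 0 \<le> e k" and se: "summable e"
  shows "summable t" and "convergent a"
proof -
  have partial: "a m + \<delta> * (\<Sum>i<m. t i) \<le> a 0 + (\<Sum>i<m. e i)" for m
  proof (induction m)
    case (Suc m)
    then show ?case using descent[of m] by (simp add: algebra_simps)
  qed simp
  have "\<delta> * (\<Sum>i<m. t i) \<le> a 0 + suminf e" for m
    using partial[of m] a0[of m] sum_le_suminf[OF se, of "{..<m}"] e0 by auto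
  then have "(\<Sum>i<m. t i) \<le> (a 0 + suminf e) / \<delta>" for m
    using \<delta> by (simp add: field_simps mult.commute)
  with t0 show "summable t" by (rule summableI_nonneg_bounded)
  have "a (Suc k) \<le> a k + e k" for k
    using descent[of k] mult_nonneg_nonneg[OF less_imp_le[OF \<delta>] t0[of k]] by linarith
  then show "convergent a" using a0 e0 se by (rule quasi_fejer_convergent)
qed

lemma Bseq_if_convergent_sq_dist:
  fixes x :: "nat \<Rightarrow> 'a::real_normed_vector"
  assumes "convergent (\<lambda>k. (norm (x k - z))\<^sup>2)"
  shows "Bseq x"
proof -
  obtain K where K: "\<And>k. (norm (x k - z))\<^sup>2 \<le> K"
    using convergent_imp_Bseq[OF assms] by (auto simp: Bseq_def)
  have "norm (x k) \<le> norm z + sqrt K" for k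
  proof -
    have "norm (x k - z) \<le> sqrt K" using real_le_rsqrt[OF K] .
    then show ?thesis using norm_triangle_ineq[of z "x k - z"] by simp
  qed
  then show ?thesis by (rule BseqI')
qed

lemma INF_less_liminf_gap:
  fixes g :: "'a \<Rightarrow> real" and h :: "nat \<Rightarrow> real"
  assumes "(INF y\<in>C. ereal (g y)) < liminf (\<lambda>k. ereal (h k))"
  obtains z \<delta> N where "z \<in> C" "0 < \<delta>" "\<And>k. N \<le> k \<Longrightarrow> g z + \<delta> \<le> h k"
proof -
  obtain z where z: "z \<in> C" and "ereal (g z) < liminf (\<lambda>k. ereal (h k))"
    using assms by (auto simp: INF_less_iff)
  then obtain r where r: "g z < r" and "ereal r < liminf (\<lambda>k. ereal (h k))"
    using ereal_dense2 by (metis less_ereal.simps(1))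
  then have "\<forall>\<^sub>F k in sequentially. ereal r < ereal (h k)" using less_LiminfD by blast
  then obtain N where "\<And>k. N \<le> k \<Longrightarrow> r < h k" by (auto simp: eventually_sequentially)
  with z r show thesis by (intro that[of z "r - g z" N]) (auto intro: less_imp_le)
qed

lemma LIMSEQ_if_subseq_LIMSEQ_and_dist_convergent:
  fixes x :: "nat \<Rightarrow> 'a::real_normed_vector"
  assumes dist: "convergent (\<lambda>k. norm (x k - l))"
    and r: "strict_mono r" and sub: "(x \<circ> r) \<longlonglongrightarrow> l"
  shows "x \<longlonglongrightarrow> l"
proof -
  obtain d where d: "(\<lambda>k. norm (x k - l)) \<longlonglongrightarrow> d" using dist by (auto simp: convergent_def)
  have "(\<lambda>n. norm (x (r n) - l)) \<longlonglongrightarrow> d" using LIMSEQ_subseq_LIMSEQ[OF d r] by (simp add: o_def)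
  moreover have "(\<lambda>n. norm (x (r n) - l)) \<longlonglongrightarrow> 0"
    using tendsto_norm_zero[OF LIM_zero[OF sub]] by (simp add: o_def)
  ultimately have "d = 0" by (rule LIMSEQ_unique)
  then show ?thesis
    using d by (simp add: tendsto_norm_zero_iff LIM_zero_cancel)
qed

locale subgradient_inexp =
  fixes f :: "'a::euclidean_space \<Rightarrow> real" and C :: "'a set"
    and x s :: "nat \<Rightarrow> 'a" and \<phi> :: "nat \<Rightarrow> 'a \<Rightarrow> 'a \<Rightarrow> 'a \<Rightarrow> real"
    and \<gamma> \<theta> lam \<alpha> \<epsilon> :: "nat \<Rightarrow> real" and \<gamma>b \<theta>b lamb \<mu> :: real
  assumes f_convex: "convex_on UNIV f" and C_closed: "closed C"
    and bars: "\<theta>b < 1/2" "lamb < 1/2"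
    and params: "\<And>k. 0 \<le> \<gamma> k" "\<And>k. \<gamma> k \<le> \<gamma>b" "\<And>k. 0 \<le> \<theta> k" "\<And>k. \<theta> k \<le> \<theta>b"
      "\<And>k. 0 \<le> lam k" "\<And>k. lam k \<le> lamb"
    and tol: "\<And>k. rel_err_tol (\<phi> k) (\<gamma> k) (\<theta> k) (lam k)"
    and mu: "0 \<le> \<mu>"
    and alpha_nonneg: "\<And>k. 0 \<le> \<alpha> k"
    and eps_nonneg: "\<And>k. 0 \<le> \<epsilon> k" and eps_noninc: "decseq \<epsilon>"
    and alpha_div: "filterlim (\<lambda>n. \<Sum>k<n. \<alpha> k) at_top sequentially"
    and alpha_sq: "summable (\<lambda>k. (\<alpha> k)\<^sup>2)"
    and eps_le: "\<And>k. \<epsilon> k \<le> \<mu> * \<alpha> k"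
    and x0: "x 0 \<in> C"
    and s_sub: "\<And>k. s k \<in> eps_subdiff f (\<epsilon> k) (x k)"
    and step: "\<And>k. x (Suc k) \<in> inexact_proj C (\<phi> k) (x k) (x k - (\<alpha> k / max 1 (norm (s k))) *\<^sub>R s k)"
begin

definition stepsize :: "nat \<Rightarrow> real" where
  "stepsize k = \<alpha> k / max 1 (norm (s k))"

definition fejer_const :: real where
  "fejer_const = 2 * \<mu> + 1 + 2 * \<gamma>b + ((\<gamma>b + 2) / (1 - \<theta>b - lamb))\<^sup>2"

lemma fejer_const_nonneg: "0 \<le> fejer_const"
  using mu params(1,2)[of 0] by (simp add: fejer_const_def)

lemma iterate_in_C: "x k \<in> C"
  using x0 step by (cases k) (auto simp: inexact_proj_def)

lemma stepsize_nonneg: "0 \<le> stepsize k"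
  using alpha_nonneg[of k] by (simp add: stepsize_def)

lemma stepsize_le: "stepsize k \<le> \<alpha> k"
  using alpha_nonneg[of k] by (simp add: stepsize_def divide_le_eq_1 field_simps mult_le_cancel_left1)

lemma stepsize_norm_le: "stepsize k * norm (s k) \<le> \<alpha> k"
  using mult_left_mono[OF max.cobounded2[of "norm (s k)" 1] alpha_nonneg[of k]]
  by (simp add: stepsize_def field_simps)

lemma fejer_inequality:
  assumes z: "z \<in> C"
  shows "(norm (x (Suc k) - z))\<^sup>2
           \<le> (norm (x k - z))\<^sup>2 + 2 * stepsize k * (f z - f (x k)) + fejer_const * (\<alpha> k)\<^sup>2"
proof -
  define t where "t = stepsize k"
  define v where "v = x k - t *\<^sub>R s k"
  define K where "K = 2 * \<gamma>b + ((\<gamma>b + 2) / (1 - \<theta>b - lamb))\<^sup>2"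
  have t0: "0 \<le> t" and tle: "t \<le> \<alpha> k" and ts: "t * norm (s k) \<le> \<alpha> k"
    using stepsize_nonneg stepsize_le stepsize_norm_le by (auto simp: t_def)
  have w: "x (Suc k) \<in> inexact_proj C (\<phi> k) (x k) v"
    using step[of k] by (simp add: v_def t_def stepsize_def)
  have "norm (v - x k) = t * norm (s k)" using t0 by (simp add: v_def)
  then have proj: "(norm (x (Suc k) - z))\<^sup>2 \<le> (norm (v - z))\<^sup>2 + K * (t * norm (s k))\<^sup>2"
    using inexact_proj_sq_dist_le[OF iterate_in_C w z tol params(1,2,3,4)[of k] bars(1)
        params(5,6)[of k] bars(2)]
    unfolding K_def by simp
  have sub: "(norm (v - z))\<^sup>2 \<le> (norm (x k - z))\<^sup>2 + 2 * t * (f z - f (x k))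
               + 2 * t * \<epsilon> k + (t * norm (s k))\<^sup>2"
    unfolding v_def power_mult_distrib by (rule eps_subdiff_step_sq_dist_le[OF s_sub t0])
  have step_sq: "(t * norm (s k))\<^sup>2 \<le> (\<alpha> k)\<^sup>2" using ts t0 by (intro power_mono) auto
  have "0 \<le> K" using params(1,2)[of 0] by (simp add: K_def)
  then have "K * (t * norm (s k))\<^sup>2 \<le> K * (\<alpha> k)\<^sup>2" by (rule mult_left_mono[OF step_sq])
  moreover have "t * \<epsilon> k \<le> \<alpha> k * (\<mu> * \<alpha> k)"
    using tle t0 eps_le[of k] eps_nonneg[of k] by (intro mult_mono) auto
  moreover have "fejer_const * (\<alpha> k)\<^sup>2 = 2 * (\<alpha> k * (\<mu> * \<alpha> k)) + (\<alpha> k)\<^sup>2 + K * (\<alpha> k)\<^sup>2"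
    by (simp add: fejer_const_def K_def power2_eq_square algebra_simps)
  ultimately show ?thesis using proj sub step_sq unfolding t_def by linarith
qed

text \<open>Bounded iterates have bounded \<epsilon>_k-subgradients, as \<epsilon>_k \<le> \<epsilon>_0.\<close>
lemma alpha_le_stepsize:
  assumes "Bseq x"
  obtains M where "\<And>k. \<alpha> k \<le> M * stepsize k"
proof -
  obtain R where R: "\<And>k. norm (x k) \<le> R" using assms by (auto simp: Bseq_def)
  have cont: "continuous_on UNIV f" by (rule convex_on_continuous[OF open_UNIV f_convex])
  obtain M where M: "\<And>k. norm (s k) \<le> M"
    using eps_subdiff_norm_bounded[OF cont, of R "\<epsilon> 0"] R s_sub eps_noninc
    by (metis decseq_def zero_le)
  have "\<alpha> k \<le> max 1 M * stepsize k" for k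
  proof -
    have "\<alpha> k = max 1 (norm (s k)) * stepsize k" by (simp add: stepsize_def)
    also have "\<dots> \<le> max 1 M * stepsize k"
      using M[of k] stepsize_nonneg[of k] by (intro mult_right_mono) auto
    finally show ?thesis .
  qed
  then show thesis by (rule that)
qed

lemma liminf_le_INF: "liminf (\<lambda>k. ereal (f (x k))) \<le> (INF y\<in>C. ereal (f y))"
proof (rule ccontr)
  assume "\<not> ?thesis"
  then have "(INF y\<in>C. ereal (f y)) < liminf (\<lambda>k. ereal (f (x k)))" by simp
  then obtain z \<delta> N where z: "z \<in> C" and \<delta>: "0 < \<delta>" and gap: "\<And>k. N \<le> k \<Longrightarrow> f z + \<delta> \<le> f (x k)"
    by (rule INF_less_liminf_gap[where g = f and h = "\<lambda>k. f (x k)"]) auto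
  define a where "a k = (norm (x (k + N) - z))\<^sup>2" for k
  have descent: "a (Suc k) + (2 * \<delta>) * stepsize (k + N) \<le> a k + fejer_const * (\<alpha> (k + N))\<^sup>2" for k
  proof -
    have "2 * stepsize (k + N) * (f z - f (x (k + N))) \<le> 2 * stepsize (k + N) * (- \<delta>)"
      using gap[of "k + N"] stepsize_nonneg[of "k + N"] by (intro mult_left_mono) auto
    then show ?thesis using fejer_inequality[OF z, of "k + N"] by (simp add: a_def algebra_simps)
  qed
  have errors: "summable (\<lambda>k. fejer_const * (\<alpha> (k + N))\<^sup>2)"
    using alpha_sq summable_iff_shift[of "\<lambda>k. (\<alpha> k)\<^sup>2" N] by (intro summable_mult) simp
  have a0: "0 \<le> a k" for k by (simp add: a_def)
  have e0: "0 \<le> fejer_const * (\<alpha> (k + N))\<^sup>2" for k using fejer_const_nonneg by simp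
  have "2 * \<delta> > 0" using \<delta> by simp
  note descent_facts = quasi_fejer_descent_summable[OF descent a0 this stepsize_nonneg e0 errors]
  have "Bseq (\<lambda>k. x (k + N))"
    using descent_facts(2) unfolding a_def by (rule Bseq_if_convergent_sq_dist)
  then obtain M where "\<And>k. \<alpha> k \<le> M * stepsize k"
    using alpha_le_stepsize Bseq_offset by blast
  with descent_facts(1) have "summable \<alpha>"
    using alpha_nonneg by (intro summable_comparison_test[of \<alpha> "\<lambda>k. M * stepsize k"]) auto
  then have "(\<lambda>n. \<Sum>k<n. \<alpha> k) \<longlonglongrightarrow> suminf \<alpha>" by (rule summable_LIMSEQ)
  then show False
    using not_tendsto_and_filterlim_at_infinity filterlim_at_top_imp_at_infinity[OF alpha_div]
    by (metis trivial_limit_sequentially)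
qed

theorem liminf_eq_INF: "liminf (\<lambda>k. ereal (f (x k))) = (INF y\<in>C. ereal (f y))"
proof (rule antisym[OF liminf_le_INF])
  show "(INF y\<in>C. ereal (f y)) \<le> liminf (\<lambda>k. ereal (f (x k)))"
    by (rule Liminf_bounded, rule always_eventually) (metis INF_lower iterate_in_C)
qed

lemma dist_minimizer_convergent:
  assumes "z \<in> minimizers f C"
  shows "convergent (\<lambda>k. (norm (x k - z))\<^sup>2)"
proof (rule quasi_fejer_convergent)
  show "(norm (x (Suc k) - z))\<^sup>2 \<le> (norm (x k - z))\<^sup>2 + fejer_const * (\<alpha> k)\<^sup>2" for k
    using assms fejer_inequality[of z k] iterate_in_C[of k] stepsize_nonneg[of k]
    by (smt (verit, best) minimizers_def mem_Collect_eq mult_nonneg_nonpos)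
qed (use alpha_sq fejer_const_nonneg in auto)

lemma minimizer_cluster_point:
  assumes "minimizers f C \<noteq> {}"
  obtains l r where "l \<in> minimizers f C" "strict_mono r" "(x \<circ> r) \<longlonglongrightarrow> l"
proof -
  obtain z where z: "z \<in> minimizers f C" using assms by blast
  then have zC: "z \<in> C" and zmin: "\<And>y. y \<in> C \<Longrightarrow> f z \<le> f y" by (auto simp: minimizers_def)
  have "(INF y\<in>C. ereal (f y)) = ereal (f z)"
    using zC zmin by (intro antisym INF_lower INF_greatest) auto
  then obtain r where r: "strict_mono r" and "(\<lambda>n. ereal (f (x (r n)))) \<longlonglongrightarrow> ereal (f z)"
    using liminf_subseq_lim[of "\<lambda>k. ereal (f (x k))"] liminf_eq_INF by (auto simp: o_def)
  then have fr: "(\<lambda>n. f (x (r n))) \<longlonglongrightarrow> f z" by (simp add: lim_ereal)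
  have "bounded (range (x \<circ> r))"
    using Bseq_subseq[OF Bseq_if_convergent_sq_dist[OF dist_minimizer_convergent[OF z]]]
    by (simp add: Bseq_eq_bounded o_def)
  then obtain l q where q: "strict_mono q" and lq: "(x \<circ> (r \<circ> q)) \<longlonglongrightarrow> l"
    using bounded_imp_convergent_subsequence by (metis comp_assoc)
  have "l \<in> C" using closed_sequentially[OF C_closed _ lq] iterate_in_C by auto
  have "(\<lambda>n. f ((x \<circ> (r \<circ> q)) n)) \<longlonglongrightarrow> f l"
    using convex_on_continuous[OF open_UNIV f_convex] lq
    by (metis continuous_on_eq_continuous_at isCont_tendsto_compose open_UNIV UNIV_I)
  moreover have "(\<lambda>n. f ((x \<circ> (r \<circ> q)) n)) \<longlonglongrightarrow> f z"
    using LIMSEQ_subseq_LIMSEQ[OF fr q] by (simp add: o_def)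
  ultimately have "f l = f z" by (rule LIMSEQ_unique)
  then have "l \<in> minimizers f C" using \<open>l \<in> C\<close> zmin by (auto simp: minimizers_def)
  then show thesis using that strict_mono_o[OF r q] lq by blast
qed

theorem converges_to_minimizer:
  assumes "minimizers f C \<noteq> {}"
  shows "\<exists>l\<in>minimizers f C. x \<longlonglongrightarrow> l"
proof -
  obtain l r where l: "l \<in> minimizers f C" and r: "strict_mono r" "(x \<circ> r) \<longlonglongrightarrow> l"
    using minimizer_cluster_point[OF assms] .
  obtain d where "(\<lambda>k. (norm (x k - l))\<^sup>2) \<longlonglongrightarrow> d"
    using dist_minimizer_convergent[OF l] by (auto simp: convergent_def)
  then have "(\<lambda>k. norm (x k - l)) \<longlonglongrightarrow> sqrt d" using tendsto_real_sqrt by fastforce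
  then have "convergent (\<lambda>k. norm (x k - l))" by (auto simp: convergent_def)
  then show ?thesis using LIMSEQ_if_subseq_LIMSEQ_and_dist_convergent r l by blast
qed

end

theorem mainTheorem5:
  fixes f :: "'a::euclidean_space \<Rightarrow> real"
    and C :: "'a set"
    and x s :: "nat \<Rightarrow> 'a"
    and \<phi> :: "nat \<Rightarrow> 'a \<Rightarrow> 'a \<Rightarrow> 'a \<Rightarrow> real"
    and \<gamma> \<theta> lam \<alpha> \<epsilon> :: "nat \<Rightarrow> real"
    and \<gamma>b \<theta>b lamb \<mu> :: real
  assumes f_convex: "convex_on UNIV f"
    and C_ne: "C \<noteq> {}" and C_closed: "closed C" and C_convex: "convex C"
    and bars: "0 \<le> \<gamma>b" "0 \<le> \<theta>b" "\<theta>b < 1/2" "0 \<le> lamb" "lamb < 1/2"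
    and params: "\<And>k. 0 \<le> \<gamma> k \<and> \<gamma> k < \<gamma>b"
                "\<And>k. 0 \<le> \<theta> k \<and> \<theta> k < \<theta>b"
                "\<And>k. 0 \<le> lam k \<and> lam k < lamb"
    and tol: "\<And>k. rel_err_tol (\<phi> k) (\<gamma> k) (\<theta> k) (lam k)"
    and mu: "0 \<le> \<mu>"
    and alpha_nonneg: "\<And>k. 0 \<le> \<alpha> k"
    and eps_nonneg: "\<And>k. 0 \<le> \<epsilon> k"
    and eps_noninc: "decseq \<epsilon>"
    and alpha_div: "filterlim (\<lambda>n. \<Sum>k<n. \<alpha> k) at_top sequentially"
    and alpha_sq: "summable (\<lambda>k. (\<alpha> k)\<^sup>2)"
    and eps_le: "\<And>k. \<epsilon> k \<le> \<mu> * \<alpha> k"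
    and x0: "x 0 \<in> C"
    and no_stop: "\<And>k. 0 \<notin> eps_subdiff f 0 (x k)"
    and s_sub: "\<And>k. s k \<in> eps_subdiff f (\<epsilon> k) (x k)"
    and s_nz: "\<And>k. s k \<noteq> 0"
    and step: "\<And>k. x (Suc k) \<in> inexact_proj C (\<phi> k) (x k)
                        (x k - (\<alpha> k / max 1 (norm (s k))) *\<^sub>R s k)"
  shows "liminf (\<lambda>k. ereal (f (x k))) = (INF y\<in>C. ereal (f y)) \<and>
         (minimizers f C \<noteq> {} \<longrightarrow> (\<exists>xs\<in>minimizers f C. x \<longlonglongrightarrow> xs))"
proof -
  interpret subgradient_inexp f C x s \<phi> \<gamma> \<theta> lam \<alpha> \<epsilon> \<gamma>b \<theta>b lamb \<mu>
    using assms by unfold_locales (auto intro: less_imp_le)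
  show ?thesis using liminf_eq_INF converges_to_minimizer by blast
qed

end
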